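(* Let $n\in\mathbb{N}$ and, for $1\le j\le n$, let $0<c_{j}<1$, $k_{j}>0$ and $q_{j}=e^{-2k_{j}^{2}}$. Then the function \[ H(x)=\prod_{j=1}^{n}e^{-x^{2}}\left(-c_{j}e^{-k_{j}^{2}-2xk_{j}},-c_{j}e^{-k_{j}^{2}+2xk_{j}};q_{j}\right)_{\infty},\qquad x\in\mathbb{R}, \] is positive definite. Furthermore, for all $m\in\mathbb{N}$ and $x_{1},\dots,x_{m}\in\mathbb{R}$ the matrices \[ \left(\prod_{j=1}^{n}e^{-(x_{r}-x_{s})^{2}}\left(-c_{j}e^{-k_{j}^{2}-2(x_{r}-x_{s})k_{j}},-c_{j}e^{-k_{j}^{2}-2(x_{s}-x_{r})k_{j}};q_{j}\right)_{\infty}\right)_{r,s=1}^{m} \] are positive semidefinite, and for $k>0$, $q=e^{-2k^{2}}$ and $0<c<q^{1/2}$ we have \[ \left(-ce^{-2xk},-ce^{2xk};q\right)_{\infty}\le e^{x^{2}}\left(-c,-c;q\right)_{\infty},\qquad x\in\mathbb{R}. \]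
   Context: For $0<q<1$ and $a\in\mathbb{C}$, $(a;q)_{\infty}=\prod_{k=0}^{\infty}(1-aq^{k})$ and $(a_1,\dots,a_r;q)_\infty=\prod_{s=1}^r(a_s;q)_\infty$. A continuous function $f:\mathbb{R}\to\mathbb{C}$ with $f(0)>0$ is called positive definite if for every $n\in\mathbb{N}$ and all $x_{1},\dots,x_{n}\in\mathbb{R}$ the matrix $(f(x_{j}-x_{k}))_{j,k=1}^{n}$ is positive semidefinite (equivalently, $f$ is the Fourier transform of a finite positive measure on $\mathbb{R}$). *)

theory Defs
  imports "HOL-Analysis.Analysis" "HOL-Library.Complex_Order"
begin

definition qpoch_inf :: "complex \<Rightarrow> real \<Rightarrow> complex" where
  "qpoch_inf a q = (\<Prod>k. 1 - a * complex_of_real (q ^ k))"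

definition qpoch_inf_list :: "complex list \<Rightarrow> real \<Rightarrow> complex" where
  "qpoch_inf_list as q = prod_list (map (\<lambda>a. qpoch_inf a q) as)"

definition psd_matrix :: "nat \<Rightarrow> (nat \<Rightarrow> nat \<Rightarrow> complex) \<Rightarrow> bool" where
  "psd_matrix m A \<longleftrightarrow>
     (\<forall>v :: nat \<Rightarrow> complex. 0 \<le> (\<Sum>r<m. \<Sum>s<m. cnj (v r) * A r s * v s))"

definition positive_definite :: "(real \<Rightarrow> complex) \<Rightarrow> bool" where
  "positive_definite f \<longleftrightarrow> continuous_on UNIV f \<and> Re (f 0) > 0 \<and> Im (f 0) = 0 \<and>
     (\<forall>m (x :: nat \<Rightarrow> real). psd_matrix m (\<lambda>r s. f (x r - x s)))"

end

theory Submission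
  imports Defs
begin

(* Let E_q(z) = \<Sum>_i q^(i choose 2) z^i / (q;q)_i be Euler's series, so that (-z;q)_inf = E_q(z).
   Expanding both q-Pochhammer symbols of one factor and completing the square gives, with
   q = exp(-2k^2) and w_i = c^i / (q;q)_i,
     exp(-x^2) (-c exp(-k^2-2xk), -c exp(-k^2+2xk); q)_inf
       = (c^2;q)_inf \<Sum>_(i,l) w_i w_l exp(-(x + k(i-l))^2),
   where the constant (c^2;q)_inf is split off by a q-Vandermonde summation.  As
   exp(-(a-b)^2) = \<Sum>_N phi_N(a) phi_N(b) with phi_N(a) = sqrt(2^N/N!) exp(-a^2) a^N, each factor
   f(x - y) is a countable sum of rank-one kernels g_N(x) g_N(y), hence positive definite.  The
   product over j is positive definite by Schur's product theorem, and f(x) <= f(0) for every such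
   kernel, which is the inequality after rescaling c by exp(k^2). *)

section \<open>Euler's series for the q-Pochhammer symbol\<close>

definition qfact :: "real \<Rightarrow> nat \<Rightarrow> real" where
  "qfact q n = (\<Prod>m<n. 1 - q ^ Suc m)"

definition euler_coeff :: "real \<Rightarrow> nat \<Rightarrow> real" where
  "euler_coeff q i = q ^ (i choose 2) / qfact q i"

definition euler_qexp :: "real \<Rightarrow> real \<Rightarrow> real" where
  "euler_qexp q z = (\<Sum>i. euler_coeff q i * z ^ i)"

lemma qfact_0 [simp]: "qfact q 0 = 1"
  by (simp add: qfact_def)

lemma qfact_Suc: "qfact q (Suc n) = qfact q n * (1 - q ^ Suc n)"
  by (simp add: qfact_def)

lemma one_minus_power_Suc_pos: "0 < q \<Longrightarrow> q < 1 \<Longrightarrow> 0 < 1 - q ^ Suc n"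
  for q :: real
  using power_Suc_less_one[of q n] by simp

lemma qfact_pos:
  assumes "0 < q" "q < 1"
  shows "0 < qfact q n"
  unfolding qfact_def by (rule prod_pos) (use one_minus_power_Suc_pos[OF assms] in blast)

lemma euler_coeff_0 [simp]: "euler_coeff q 0 = 1"
  by (simp add: euler_coeff_def binomial_eq_0)

lemma euler_coeff_nonneg: "0 < q \<Longrightarrow> q < 1 \<Longrightarrow> 0 \<le> euler_coeff q i"
  unfolding euler_coeff_def using qfact_pos[of q i] by simp

lemma euler_coeff_Suc:
  assumes "0 < q" "q < 1"
  shows "euler_coeff q (Suc i) * (1 - q ^ Suc i) = euler_coeff q i * q ^ i"
proof -
  have "Suc i choose 2 = (i choose 2) + i"
    by (simp add: numeral_2_eq_2)
  then show ?thesis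
    using one_minus_power_Suc_pos[OF assms, of i] qfact_pos[OF assms, of i]
    by (simp add: euler_coeff_def qfact_Suc power_add field_simps del: power_Suc)
qed

lemma summable_euler_coeff_nonneg:
  assumes q: "0 < q" "q < 1" and r: "0 \<le> r"
  shows "summable (\<lambda>i. euler_coeff q i * r ^ i)"
proof -
  have "(\<lambda>n. r * q ^ n / (1 - q)) \<longlonglongrightarrow> r * 0 / (1 - q)"
    using q by (intro tendsto_intros LIMSEQ_power_zero) auto
  then have "eventually (\<lambda>n. r * q ^ n / (1 - q) < 1/2) sequentially"
    by (intro order_tendstoD) auto
  then obtain N where N: "\<And>n. n \<ge> N \<Longrightarrow> r * q ^ n / (1 - q) < 1/2"
    unfolding eventually_sequentially by blast
  show ?thesis
  proof (rule summable_ratio_test[of "1/2" N])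
    fix n assume "N \<le> n"
    define a where "a = euler_coeff q n * r ^ n"
    have a: "0 \<le> a"
      unfolding a_def using euler_coeff_nonneg[OF q] r by simp
    have "1 - q \<le> 1 - q ^ Suc n"
      using q by (simp add: power_le_one mult_left_le)
    moreover have "0 < 1 - q ^ Suc n"
      using one_minus_power_Suc_pos[OF q] .
    ultimately have "euler_coeff q (Suc n) = euler_coeff q n * q ^ n / (1 - q ^ Suc n)"
      using euler_coeff_Suc[OF q, of n] by (simp add: field_simps)
    then have "euler_coeff q (Suc n) * r ^ Suc n = a * (r * q ^ n / (1 - q ^ Suc n))"
      by (simp add: a_def)
    also have "\<dots> \<le> a * (r * q ^ n / (1 - q))"
      using a r q \<open>1 - q \<le> 1 - q ^ Suc n\<close> \<open>0 < 1 - q ^ Suc n\<close>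
      by (intro mult_left_mono divide_left_mono mult_pos_pos) auto
    also have "\<dots> \<le> a * (1/2)"
      using N[OF \<open>N \<le> n\<close>] a by (intro mult_left_mono) auto
    finally show "norm (euler_coeff q (Suc n) * r ^ Suc n) \<le> 1/2 * norm a"
      using euler_coeff_nonneg[OF q] r a by (simp add: abs_mult)
  qed auto
qed

lemma summable_norm_euler_coeff:
  assumes "0 < q" "q < 1"
  shows "summable (\<lambda>i. norm (euler_coeff q i * z ^ i))"
  using summable_euler_coeff_nonneg[OF assms, of "\<bar>z\<bar>"] euler_coeff_nonneg[OF assms]
  by (simp add: abs_mult power_abs)

lemma euler_qexp_sums:
  assumes "0 < q" "q < 1"
  shows "(\<lambda>i. euler_coeff q i * z ^ i) sums euler_qexp q z"
  unfolding euler_qexp_def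
  by (rule summable_sums, rule summable_norm_cancel, rule summable_norm_euler_coeff[OF assms])

lemma isCont_euler_qexp:
  assumes "0 < q" "q < 1"
  shows "isCont (euler_qexp q) z"
  unfolding euler_qexp_def[abs_def]
  using summable_norm_cancel[OF summable_norm_euler_coeff[OF assms]]
  by (intro isCont_powser_converges_everywhere) auto

lemma euler_qexp_0 [simp]: "euler_qexp q 0 = 1"
  unfolding euler_qexp_def using powser_zero[of "euler_coeff q"] by simp

lemma euler_qexp_functional_eq:
  assumes q: "0 < q" "q < 1"
  shows "euler_qexp q z = (1 + z) * euler_qexp q (q * z)"
proof -
  define a where "a i = euler_coeff q i * (q * z) ^ i" for i
  have a_sums: "a sums euler_qexp q (q * z)"
    unfolding a_def by (rule euler_qexp_sums[OF q])
  then have "(\<lambda>i. z * a i) sums (z * euler_qexp q (q * z))"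
    by (rule sums_mult)
  define b where "b i = (if i = 0 then 0 else z * a (i - 1))" for i
  have "(\<lambda>i. b (Suc i)) sums (z * euler_qexp q (q * z))"
    unfolding b_def using \<open>(\<lambda>i. z * a i) sums _\<close> by simp
  then have "b sums (z * euler_qexp q (q * z))"
    by (subst (asm) sums_Suc_iff) (simp add: b_def)
  from sums_add[OF a_sums this]
  have "(\<lambda>i. a i + b i) sums ((1 + z) * euler_qexp q (q * z))"
    by (simp add: algebra_simps)
  moreover have "a i + b i = euler_coeff q i * z ^ i" for i
  proof (cases i)
    case (Suc j)
    have "euler_coeff q (Suc j) * q ^ Suc j + euler_coeff q j * q ^ j = euler_coeff q (Suc j)"
      using euler_coeff_Suc[OF q, of j] by (simp add: algebra_simps)
    then have "(euler_coeff q (Suc j) * q ^ Suc j + euler_coeff q j * q ^ j) * z ^ Suc j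
               = euler_coeff q (Suc j) * z ^ Suc j"
      by simp
    then show ?thesis
      using Suc by (simp add: a_def b_def power_mult_distrib algebra_simps)
  qed (simp add: a_def b_def)
  ultimately show ?thesis
    using euler_qexp_sums[OF q, of z] sums_unique2 by force
qed
lemma euler_qexp_eq_prod:
  assumes "0 < q" "q < 1"
  shows "euler_qexp q z = (\<Prod>m<M. 1 + z * q ^ m) * euler_qexp q (q ^ M * z)"
proof (induction M)
  case (Suc M)
  then show ?case
    using euler_qexp_functional_eq[OF assms, of "q ^ M * z"] by (simp add: algebra_simps)
qed simp

lemma euler_qexp_prod_tendsto:
  assumes q: "0 < q" "q < 1"
  shows "(\<lambda>M. \<Prod>m<M. 1 + z * q ^ m) \<longlonglongrightarrow> euler_qexp q z"
proof -
  have "(\<lambda>M. q ^ M * z) \<longlonglongrightarrow> 0 * z"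
    using q by (intro tendsto_intros LIMSEQ_power_zero) auto
  then have tail: "(\<lambda>M. euler_qexp q (q ^ M * z)) \<longlonglongrightarrow> 1"
    using isCont_tendsto_compose[OF isCont_euler_qexp[OF q, of 0]] by fastforce
  then have "(\<lambda>M. euler_qexp q z / euler_qexp q (q ^ M * z)) \<longlonglongrightarrow> euler_qexp q z / 1"
    by (intro tendsto_intros) auto
  moreover have "eventually (\<lambda>M. euler_qexp q (q ^ M * z) \<noteq> 0) sequentially"
    using tail by (intro tendsto_imp_eventually_ne) auto
  then have "eventually (\<lambda>M. euler_qexp q z / euler_qexp q (q ^ M * z) = (\<Prod>m<M. 1 + z * q ^ m))
               sequentially"
    by eventually_elim (metis euler_qexp_eq_prod[OF q] nonzero_mult_div_cancel_right)
  ultimately show ?thesis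
    by (simp add: tendsto_cong)
qed

lemma euler_qexp_ge_1:
  assumes "0 < q" "q < 1" "0 \<le> z"
  shows "1 \<le> euler_qexp q z"
  using assms
  by (intro LIMSEQ_le_const[OF euler_qexp_prod_tendsto[OF assms(1,2)]] exI[of _ 0] allI impI prod_ge_1)
     auto

lemma euler_qexp_nonneg:
  assumes q: "0 < q" "q < 1" and z: "-1 \<le> z" "z \<le> 0"
  shows "0 \<le> euler_qexp q z"
proof (rule LIMSEQ_le_const[OF euler_qexp_prod_tendsto[OF q]])
  have "0 \<le> 1 + z * q ^ m" for m
  proof -
    have "-1 \<le> z * q ^ m"
      using mult_left_mono_neg[of "q ^ m" 1 z] q z by (simp add: power_le_one)
    then show ?thesis
      by linarith
  qed
  then show "\<exists>N. \<forall>M\<ge>N. 0 \<le> (\<Prod>m<M. 1 + z * q ^ m)"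
    by (intro exI[of _ 0] allI impI prod_nonneg) auto
qed

lemma qpoch_inf_eq_euler_qexp:
  assumes q: "0 < q" "q < 1" and "0 \<le> z"
  shows "qpoch_inf (complex_of_real (- z)) q = complex_of_real (euler_qexp q z)"
proof -
  have "(\<lambda>M. complex_of_real (\<Prod>m<M. 1 + z * q ^ m)) \<longlonglongrightarrow> complex_of_real (euler_qexp q z)"
    by (intro tendsto_of_real euler_qexp_prod_tendsto[OF q])
  moreover have "euler_qexp q z \<noteq> 0"
    using euler_qexp_ge_1[OF assms] by simp
  ultimately show ?thesis
    unfolding qpoch_inf_def by (intro prodinf_eq_prod_lim') auto
qed

lemma qpoch_inf_list_pair_eq_euler_qexp:
  assumes "0 < q" "q < 1" "0 \<le> z" "0 \<le> w"
  shows "qpoch_inf_list [complex_of_real (- z), complex_of_real (- w)] q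
         = complex_of_real (euler_qexp q z * euler_qexp q w)"
  using qpoch_inf_eq_euler_qexp[OF assms(1,2,3)] qpoch_inf_eq_euler_qexp[OF assms(1,2,4)]
  by (simp add: qpoch_inf_list_def)

section \<open>A q-Vandermonde summation\<close>

definition qvdm_term :: "real \<Rightarrow> nat \<Rightarrow> nat \<Rightarrow> nat \<Rightarrow> real" where
  "qvdm_term q I J l =
     (if l \<le> I \<and> l \<le> J
      then (-1) ^ l * q ^ (l choose 2) / (qfact q l * qfact q (I - l) * qfact q (J - l)) else 0)"

lemma qvdm_term_Suc_Suc_0:
  assumes q: "0 < q" "q < 1"
  shows "(1 - q ^ Suc I) * qvdm_term q (Suc I) (Suc J) 0 = qvdm_term q I (Suc J) 0"
  using qfact_pos[OF q, of I] qfact_pos[OF q, of "Suc J"] one_minus_power_Suc_pos[OF q, of I]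
  by (simp add: qvdm_term_def qfact_Suc del: power_Suc)

lemma qvdm_term_Suc_Suc_Suc:
  assumes q: "0 < q" "q < 1"
  shows "(1 - q ^ Suc I) * qvdm_term q (Suc I) (Suc J) (Suc a)
         = qvdm_term q I (Suc J) (Suc a) - q ^ I * qvdm_term q I J a"
proof (cases "a \<le> I \<and> a \<le> J")
  case True
  then obtain d e where I: "I = a + d" and J: "J = a + e"
    using le_Suc_ex by blast
  have choose: "Suc a choose 2 = (a choose 2) + a"
    by (simp add: numeral_2_eq_2)
  have sign: "(-1::real) ^ Suc a = - ((-1) ^ a)"
    by simp
  define u where "u = (-1) ^ a * q ^ (a choose 2) / (qfact q a * (1 - q ^ Suc a) * qfact q e)"
  have pos: "0 < qfact q a" "0 < qfact q d" "0 < qfact q e" "0 < 1 - q ^ Suc a"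
    using qfact_pos[OF q] one_minus_power_Suc_pos[OF q] by auto
  have lhs: "qvdm_term q (Suc I) (Suc J) (Suc a) = - (q ^ a * u) / qfact q d"
    using pos by (simp add: qvdm_term_def u_def I J choose sign qfact_Suc power_add field_simps del: power_Suc)
  have rhs2: "qvdm_term q I J a = (1 - q ^ Suc a) * u / qfact q d"
    using pos by (simp add: qvdm_term_def u_def I J field_simps del: power_Suc)
  show ?thesis
  proof (cases d)
    case 0
    have "qvdm_term q I (Suc J) (Suc a) = 0"
      by (simp add: qvdm_term_def I 0)
    then show ?thesis
      unfolding lhs rhs2 by (simp add: I 0 algebra_simps)
  next
    case (Suc d')
    have rhs1: "qvdm_term q I (Suc J) (Suc a) = - (q ^ a * u) / qfact q d'"
      using pos by (simp add: qvdm_term_def u_def I J Suc choose sign qfact_Suc power_add field_simps del: power_Suc)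
    have "0 < qfact q d'" "0 < 1 - q ^ Suc d'"
      using qfact_pos[OF q] one_minus_power_Suc_pos[OF q] by auto
    moreover have "q ^ I = q ^ a * q ^ Suc d'" "q ^ Suc I = q ^ Suc a * q ^ Suc d'"
      by (simp_all add: I Suc power_add)
    ultimately show ?thesis
      unfolding lhs rhs1 rhs2 Suc qfact_Suc
      by (simp add: field_simps del: power_Suc)
  qed
qed (auto simp: qvdm_term_def)

lemma sum_qvdm_term_Suc_Suc:
  assumes q: "0 < q" "q < 1"
  shows "(1 - q ^ Suc I) * (\<Sum>l\<le>Suc I. qvdm_term q (Suc I) (Suc J) l)
         = (\<Sum>l\<le>I. qvdm_term q I (Suc J) l) - q ^ I * (\<Sum>l\<le>I. qvdm_term q I J l)"
proof -
  have shift: "qvdm_term q I (Suc J) 0 + (\<Sum>a\<le>I. qvdm_term q I (Suc J) (Suc a))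
               = (\<Sum>l\<le>I. qvdm_term q I (Suc J) l)"
    using sum.atMost_Suc_shift[of "qvdm_term q I (Suc J)" I] by (simp add: qvdm_term_def)
  have "(1 - q ^ Suc I) * (\<Sum>l\<le>Suc I. qvdm_term q (Suc I) (Suc J) l)
        = (1 - q ^ Suc I) * qvdm_term q (Suc I) (Suc J) 0
          + (\<Sum>a\<le>I. (1 - q ^ Suc I) * qvdm_term q (Suc I) (Suc J) (Suc a))"
    by (simp only: sum.atMost_Suc_shift sum_distrib_left distrib_left)
  also have "\<dots> = (\<Sum>l\<le>I. qvdm_term q I (Suc J) l) - q ^ I * (\<Sum>l\<le>I. qvdm_term q I J l)"
    unfolding qvdm_term_Suc_Suc_0[OF q] qvdm_term_Suc_Suc_Suc[OF q] shift[symmetric]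
    by (simp add: sum_subtractf sum_distrib_left)
  finally show ?thesis .
qed

lemma sum_qvdm_term:
  assumes q: "0 < q" "q < 1"
  shows "(\<Sum>l\<le>I. qvdm_term q I J l) = q ^ (I * J) / (qfact q I * qfact q J)"
proof (induction I arbitrary: J)
  case 0
  then show ?case by (simp add: qvdm_term_def binomial_eq_0)
next
  case (Suc I)
  show ?case
  proof (cases J)
    case 0
    then show ?thesis
      by (simp add: sum.atMost_Suc_shift qvdm_term_def binomial_eq_0 del: sum.atMost_Suc)
  next
    case (Suc J')
    have "(1 - q ^ Suc I) * (\<Sum>l\<le>Suc I. qvdm_term q (Suc I) J l)
          = q ^ (I * J) / (qfact q I * qfact q J) - q ^ I * (q ^ (I * J') / (qfact q I * qfact q J'))"
      by (simp only: Suc sum_qvdm_term_Suc_Suc[OF q] Suc.IH)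
    also have "\<dots> = (1 - q ^ Suc I) * (q ^ (Suc I * J) / (qfact q (Suc I) * qfact q J))"
    proof -
      have powers: "q ^ (I * J) = q ^ (I * J') * q ^ I" "q ^ (Suc I * J) = q ^ (I * J') * q ^ I * q ^ Suc J'"
        by (simp_all add: Suc power_add[symmetric] algebra_simps del: power_Suc)
      have "a * x / (P * (Q * (1 - y))) - x * (a / (P * Q)) = (1 - s) * (a * x * y / (P * (1 - s) * (Q * (1 - y))))"
        if "P \<noteq> 0" "Q \<noteq> 0" "1 - y \<noteq> 0" "1 - s \<noteq> 0" for a x y s P Q :: real
        using that by (simp add: divide_simps) (simp add: algebra_simps)
      from this[of "qfact q I" "qfact q J'" "q ^ Suc J'" "q ^ Suc I"]
      show ?thesis
        unfolding powers unfolding Suc qfact_Suc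
        using qfact_pos[OF q, of I] qfact_pos[OF q, of J'] one_minus_power_Suc_pos[OF q, of I]
          one_minus_power_Suc_pos[OF q, of J']
        by (simp add: mult.assoc del: power_Suc)
    qed
    finally show ?thesis
      using one_minus_power_Suc_pos[OF q, of I] by (simp only: mult_cancel_left) simp
  qed
qed

section \<open>Feature expansions of the Gaussian kernel\<close>

lemma has_sum_product:
  fixes f g :: "_ \<Rightarrow> real"
  assumes f: "(f has_sum F) A" and g: "(g has_sum G) B"
    and f_abs: "(\<lambda>x. norm (f x)) summable_on A" and g_abs: "(\<lambda>y. norm (g y)) summable_on B"
  shows "((\<lambda>(x, y). f x * g y) has_sum (F * G)) (A \<times> B)"
proof -
  have "(\<lambda>(x, y). norm (f x) * norm (g y)) summable_on A \<times> B"
  proof (rule summable_on_SigmaI[where g = "\<lambda>x. norm (f x) * infsum (\<lambda>y. norm (g y)) B"])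
    show "((\<lambda>y. case (x, y) of (x, y) \<Rightarrow> norm (f x) * norm (g y))
            has_sum norm (f x) * infsum (\<lambda>y. norm (g y)) B) B" for x
      using has_sum_cmult_right[OF has_sum_infsum[OF g_abs]] by simp
  qed (use summable_on_cmult_left[OF f_abs] in auto)
  moreover have "(\<lambda>z. norm ((\<lambda>(x, y). f x * g y) z)) = (\<lambda>(x, y). norm (f x) * norm (g y))"
    by (simp add: case_prod_unfold abs_mult)
  ultimately have "(\<lambda>(x, y). f x * g y) summable_on A \<times> B"
    by (metis abs_summable_summable)
  then show ?thesis
  proof (rule has_sum_SigmaI[where g = "\<lambda>x. f x * G", rotated 2])
    show "((\<lambda>y. case (x, y) of (x, y) \<Rightarrow> f x * g y) has_sum f x * G) B" for x
      using has_sum_cmult_right[OF g] by simp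
  qed (use has_sum_cmult_left[OF f] in simp)
qed

definition gauss_feature :: "nat \<Rightarrow> real \<Rightarrow> real" where
  "gauss_feature N a = sqrt (2 ^ N / fact N) * exp (- a\<^sup>2) * a ^ N"

text \<open>Expand \<open>exp (2 a b)\<close> in \<open>exp (- (a - b)\<^sup>2) = exp (- a\<^sup>2) * exp (- b\<^sup>2) * exp (2 a b)\<close>.\<close>

lemma gauss_feature_expansion:
  "((\<lambda>N. gauss_feature N a * gauss_feature N b) has_sum exp (- (a - b)\<^sup>2)) UNIV"
proof -
  define C where "C = exp (- a\<^sup>2) * exp (- b\<^sup>2)"
  have "(\<lambda>N. C * ((2*a*b) ^ N /\<^sub>R fact N)) sums (C * exp (2*a*b))"
    by (intro sums_mult exp_converges)
  moreover have "summable (\<lambda>N. norm (C * ((2*a*b) ^ N /\<^sub>R fact N)))"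
    using summable_mult[OF summable_exp[of "\<bar>2*a*b\<bar>"], of C]
    by (simp add: C_def abs_mult power_abs divide_inverse)
  moreover have "C * ((2*a*b) ^ N /\<^sub>R fact N) = gauss_feature N a * gauss_feature N b" for N
  proof -
    have "sqrt (2 ^ N / fact N) * sqrt (2 ^ N / fact N) = (2 ^ N / fact N :: real)"
      by simp
    then show ?thesis
      unfolding gauss_feature_def C_def by (simp add: power_mult_distrib field_simps)
  qed
  moreover have "C * exp (2*a*b) = exp (- (a - b)\<^sup>2)"
    by (simp add: C_def exp_add[symmetric] power2_eq_square algebra_simps)
  ultimately show ?thesis
    using norm_summable_imp_has_sum[of "\<lambda>N. C * ((2*a*b) ^ N /\<^sub>R fact N)"] by simp
qed

lemma abs_gauss_feature: "\<bar>gauss_feature N a\<bar> = gauss_feature N \<bar>a\<bar>"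
  by (simp add: gauss_feature_def abs_mult power_abs)

lemma abs_gauss_feature_le_1: "\<bar>gauss_feature N a\<bar> \<le> 1"
proof -
  have "(\<Sum>N\<in>{N}. gauss_feature N a * gauss_feature N a) \<le> exp (- (a - a)\<^sup>2)"
    by (rule finite_sum_le_has_sum[OF gauss_feature_expansion]) auto
  then have "(gauss_feature N a)\<^sup>2 \<le> 1\<^sup>2"
    by (simp add: power2_eq_square)
  then show ?thesis
    using abs_le_square_iff[of "gauss_feature N a" 1] by simp
qed

lemma summable_on_weight_product:
  fixes w :: "'a \<Rightarrow> real"
  assumes "\<And>i. 0 \<le> w i" "w summable_on UNIV"
  shows "(\<lambda>(i, l). w i * w l) summable_on UNIV \<times> UNIV"
proof -
  have "(\<lambda>i. norm (w i)) summable_on UNIV"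
    using assms by simp
  then show ?thesis
    using has_sum_product[OF has_sum_infsum[OF assms(2)] has_sum_infsum[OF assms(2)]]
    unfolding summable_on_def by blast
qed

lemma summable_on_gauss_mixture_terms:
  fixes w A B :: "nat \<Rightarrow> real"
  assumes w_nonneg: "\<And>i. 0 \<le> w i" and w_summable: "w summable_on UNIV"
  shows "(\<lambda>((i, l), N). w i * w l * (gauss_feature N (A i) * gauss_feature N (B l)))
           summable_on (UNIV \<times> UNIV) \<times> UNIV"
proof -
  define F where "F = (\<lambda>((i, l), N). w i * w l * (gauss_feature N (A i) * gauss_feature N (B l)))"
  define F_abs where
    "F_abs = (\<lambda>((i, l), N). w i * w l * (gauss_feature N \<bar>A i\<bar> * gauss_feature N \<bar>B l\<bar>))"
  define G_abs where "G_abs = (\<lambda>(i, l). w i * w l * exp (- (\<bar>A i\<bar> - \<bar>B l\<bar>)\<^sup>2))"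
  have "F_abs summable_on (UNIV \<times> UNIV) \<times> UNIV"
  proof (rule summable_on_SigmaI[where g = G_abs])
    fix z :: "nat \<times> nat"
    obtain i l where z: "z = (i, l)" by fastforce
    show "((\<lambda>N. F_abs (z, N)) has_sum G_abs z) UNIV"
      using has_sum_cmult_right[OF gauss_feature_expansion, of "w i * w l"]
      by (simp add: z F_abs_def G_abs_def)
    show "0 \<le> F_abs (z, N)" for N
      using w_nonneg by (simp add: z F_abs_def gauss_feature_def)
    show "G_abs summable_on UNIV \<times> UNIV"
      unfolding G_abs_def
      by (rule summable_on_comparison_test[OF summable_on_weight_product[OF w_nonneg w_summable]])
         (auto simp: w_nonneg mult_left_le)
  qed
  moreover have "(\<lambda>z. norm (F z)) = F_abs"
    by (simp add: F_def F_abs_def case_prod_unfold abs_mult abs_gauss_feature w_nonneg)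
  ultimately have "F summable_on (UNIV \<times> UNIV) \<times> UNIV"
    by (metis abs_summable_summable)
  then show ?thesis
    unfolding F_def .
qed

lemma gauss_mixture_expansion:
  fixes w A B :: "nat \<Rightarrow> real"
  assumes w_nonneg: "\<And>i. 0 \<le> w i" and w_summable: "w summable_on UNIV"
  shows "((\<lambda>N. (\<Sum>\<^sub>\<infinity>i. w i * gauss_feature N (A i)) * (\<Sum>\<^sub>\<infinity>l. w l * gauss_feature N (B l)))
           has_sum (\<Sum>\<^sub>\<infinity>(i, l). w i * w l * exp (- (A i - B l)\<^sup>2))) UNIV"
proof -
  define S where "S = (\<Sum>\<^sub>\<infinity>(i, l). w i * w l * exp (- (A i - B l)\<^sup>2))"
  define F where "F = (\<lambda>((i, l), N). w i * w l * (gauss_feature N (A i) * gauss_feature N (B l)))"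
  have "(\<lambda>(i, l). w i * w l * exp (- (A i - B l)\<^sup>2)) summable_on UNIV \<times> UNIV"
    by (rule summable_on_comparison_test[OF summable_on_weight_product[OF w_nonneg w_summable]])
       (auto simp: w_nonneg mult_left_le)
  from summable_on_gauss_mixture_terms[OF w_nonneg w_summable, of A B]
  have "(F has_sum S) ((UNIV \<times> UNIV) \<times> UNIV)"
    unfolding F_def[symmetric]
  proof (rule has_sum_SigmaI[where g = "\<lambda>(i, l). w i * w l * exp (- (A i - B l)\<^sup>2)", rotated 2])
    fix z :: "nat \<times> nat"
    obtain i l where z: "z = (i, l)" by fastforce
    show "((\<lambda>N. F (z, N)) has_sum (case z of (i, l) \<Rightarrow> w i * w l * exp (- (A i - B l)\<^sup>2))) UNIV"
      using has_sum_cmult_right[OF gauss_feature_expansion, of "w i * w l"] z by (simp add: F_def)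
  qed (use has_sum_infsum[OF \<open>_ summable_on UNIV \<times> UNIV\<close>] in \<open>simp add: S_def\<close>)
  then have "((\<lambda>p. F (snd p, fst p)) has_sum S) (UNIV \<times> (UNIV \<times> UNIV))"
    by (rule has_sum_swap[where f = F, unfolded case_prod_unfold, THEN iffD1])
  then show ?thesis
    unfolding S_def[symmetric]
  proof (rule has_sum_Sigma')
    fix N :: nat
    define f where "f i = w i * gauss_feature N (A i)" for i
    define g where "g l = w l * gauss_feature N (B l)" for l
    have weighted: "(\<lambda>i. norm (w i * h i)) summable_on UNIV" if "\<And>i. \<bar>h i\<bar> \<le> 1" for h :: "nat \<Rightarrow> real"
      by (rule Infinite_Sum.abs_summable_on_comparison_test'[OF w_summable])
         (use that w_nonneg in \<open>simp add: abs_mult mult_left_le\<close>)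
    have f: "(\<lambda>i. norm (f i)) summable_on UNIV" and g: "(\<lambda>l. norm (g l)) summable_on UNIV"
      unfolding f_def g_def by (intro weighted abs_gauss_feature_le_1)+
    have "((\<lambda>(i, l). f i * g l) has_sum (infsum f UNIV * infsum g UNIV)) (UNIV \<times> UNIV)"
      using has_sum_product[OF has_sum_infsum[OF abs_summable_summable[OF f]]
          has_sum_infsum[OF abs_summable_summable[OF g]] f g] .
    then show "((\<lambda>y. F (snd (N, y), fst (N, y))) has_sum
          (\<Sum>\<^sub>\<infinity>i. w i * gauss_feature N (A i)) * (\<Sum>\<^sub>\<infinity>l. w l * gauss_feature N (B l))) (UNIV \<times> UNIV)"
      by (simp add: F_def f_def[abs_def] g_def[abs_def] case_prod_unfold mult_ac)
  qed
qed

section \<open>Positive definite kernels\<close>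

definition pd_kernel :: "('a \<Rightarrow> 'a \<Rightarrow> complex) \<Rightarrow> bool" where
  "pd_kernel K \<longleftrightarrow> (\<forall>m (x :: nat \<Rightarrow> 'a). psd_matrix m (\<lambda>r s. K (x r) (x s)))"

definition has_feature_expansion :: "(nat \<Rightarrow> 'a \<Rightarrow> real) \<Rightarrow> ('a \<Rightarrow> 'a \<Rightarrow> real) \<Rightarrow> bool" where
  "has_feature_expansion g K \<longleftrightarrow> (\<forall>x y. ((\<lambda>N. g N x * g N y) has_sum K x y) UNIV)"

lemma has_sum_sum:
  fixes f :: "'i \<Rightarrow> 'a \<Rightarrow> 'b :: topological_comm_monoid_add"
  assumes "finite I" "\<And>i. i \<in> I \<Longrightarrow> (f i has_sum s i) A"
  shows "((\<lambda>x. \<Sum>i\<in>I. f i x) has_sum (\<Sum>i\<in>I. s i)) A"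
  using assms by (induction I rule: finite_induct) (auto intro: has_sum_add)

lemma pd_kernel_const_one: "pd_kernel (\<lambda>x y. 1)"
  unfolding pd_kernel_def psd_matrix_def
proof (intro allI)
  fix m and v :: "nat \<Rightarrow> complex"
  have "(\<Sum>r<m. \<Sum>s<m. cnj (v r) * 1 * v s) = cnj (\<Sum>r<m. v r) * (\<Sum>s<m. v s)"
    by (simp add: sum_product)
  also have "\<dots> = complex_of_real ((cmod (\<Sum>s<m. v s))\<^sup>2)"
    by (subst complex_norm_square) (rule mult.commute)
  finally show "0 \<le> (\<Sum>r<m. \<Sum>s<m. cnj (v r) * 1 * v s)"
    by (simp add: less_eq_complex_def)
qed

text \<open>Schur's product theorem, in the form needed here: each rank-one summand
  \<open>g N x * g N y\<close> of \<open>h\<close> rescales the quadratic form of \<open>K\<close> by the vector \<open>v r * g N (x r)\<close>.\<close>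

lemma pd_kernel_mult_feature_expansion:
  assumes K: "pd_kernel K" and h: "has_feature_expansion g h"
  shows "pd_kernel (\<lambda>x y. K x y * complex_of_real (h x y))"
  unfolding pd_kernel_def psd_matrix_def
proof (intro allI)
  fix m and x :: "nat \<Rightarrow> 'a" and v :: "nat \<Rightarrow> complex"
  define Q where
    "Q N = (\<Sum>r<m. \<Sum>s<m. cnj (v r) * (K (x r) (x s) * complex_of_real (g N (x r) * g N (x s))) * v s)"
    for N
  have Q_sum: "(Q has_sum (\<Sum>r<m. \<Sum>s<m. cnj (v r) * (K (x r) (x s) * complex_of_real (h (x r) (x s))) * v s))
          UNIV"
    unfolding Q_def
  proof (intro has_sum_sum)
    fix r s
    have "((\<lambda>N. complex_of_real (g N (x r) * g N (x s))) has_sum complex_of_real (h (x r) (x s))) UNIV"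
      using h by (intro has_sum_of_real) (simp add: has_feature_expansion_def)
    from has_sum_cmult_left[OF has_sum_cmult_right[OF this, of "cnj (v r) * K (x r) (x s)"], of "v s"]
    show "((\<lambda>N. cnj (v r) * (K (x r) (x s) * complex_of_real (g N (x r) * g N (x s))) * v s) has_sum
          cnj (v r) * (K (x r) (x s) * complex_of_real (h (x r) (x s))) * v s) UNIV"
      by (simp add: mult.assoc)
  qed auto
  have "0 \<le> Q N" for N
  proof -
    define u where "u r = v r * complex_of_real (g N (x r))" for r
    have "Q N = (\<Sum>r<m. \<Sum>s<m. cnj (u r) * K (x r) (x s) * u s)"
      unfolding Q_def u_def by (intro sum.cong refl) (simp add: mult_ac)
    then show ?thesis
      using K unfolding pd_kernel_def psd_matrix_def by simp
  qed
  then have "0 \<le> infsum Q UNIV"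
    using Q_sum by (intro infsum_nonneg_complex) (auto simp: summable_on_def)
  then show "0 \<le> (\<Sum>r<m. \<Sum>s<m. cnj (v r) * (K (x r) (x s) * complex_of_real (h (x r) (x s))) * v s)"
    using infsumI[OF Q_sum] by simp
qed

lemma pd_kernel_prod_feature_expansions:
  assumes "finite J" and "\<And>j. j \<in> J \<Longrightarrow> has_feature_expansion (g j) (K j)"
  shows "pd_kernel (\<lambda>x y. \<Prod>j\<in>J. complex_of_real (K j x y))"
  using assms
proof (induction J rule: finite_induct)
  case empty
  then show ?case
    using pd_kernel_const_one by simp
next
  case (insert a J)
  then have "pd_kernel (\<lambda>x y. (\<Prod>j\<in>J. complex_of_real (K j x y)) * complex_of_real (K a x y))"
    by (intro pd_kernel_mult_feature_expansion[where g = "g a"]) auto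
  then show ?case
    using insert by (simp add: mult.commute)
qed

lemma feature_expansion_le:
  assumes "has_feature_expansion g K"
  shows "2 * K x y \<le> K x x + K y y"
proof -
  have "((\<lambda>N. g N x * g N x + g N y * g N y + (-2) * (g N x * g N y)) has_sum K x x + K y y + (-2) * K x y) UNIV"
    using assms unfolding has_feature_expansion_def
    by (intro has_sum_add has_sum_cmult_right) auto
  moreover have "g N x * g N x + g N y * g N y + (-2) * (g N x * g N y) = (g N x - g N y)\<^sup>2" for N
    by (simp add: power2_eq_square algebra_simps)
  ultimately have "((\<lambda>N. (g N x - g N y)\<^sup>2) has_sum K x x + K y y + (-2) * K x y) UNIV"
    by simp
  then have "0 \<le> K x x + K y y + (-2) * K x y"
    by (rule has_sum_nonneg) simp
  then show ?thesis
    by simp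
qed

section \<open>The Gaussian-weighted q-Pochhammer factor\<close>

definition mixture_weight :: "real \<Rightarrow> real \<Rightarrow> nat \<Rightarrow> real" where
  "mixture_weight c q i = c ^ i / qfact q i"

lemma mixture_weight_nonneg: "0 < q \<Longrightarrow> q < 1 \<Longrightarrow> 0 \<le> c \<Longrightarrow> 0 \<le> mixture_weight c q i"
  unfolding mixture_weight_def using qfact_pos[of q i] by simp

lemma summable_mixture_weight:
  assumes q: "0 < q" "q < 1" and c: "0 \<le> c" "c < 1"
  shows "summable (mixture_weight c q)"
proof -
  have "(\<lambda>n. q ^ n) \<longlonglongrightarrow> 0"
    using q by (intro LIMSEQ_power_zero) auto
  moreover have "0 < (1 - c) / (1 + c)"
    using c by simp
  ultimately have "eventually (\<lambda>n. q ^ n < (1 - c) / (1 + c)) sequentially"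
    by (intro order_tendstoD) auto
  then obtain N where N: "\<And>n. n \<ge> N \<Longrightarrow> q ^ n < (1 - c) / (1 + c)"
    unfolding eventually_sequentially by blast
  show ?thesis
  proof (rule summable_ratio_test[of "(1 + c) / 2" N])
    fix n assume "N \<le> n"
    have pos: "0 < 1 - q ^ Suc n"
      using one_minus_power_Suc_pos[OF q] .
    have "q ^ Suc n * (1 + c) < 1 - c"
      using N[of "Suc n"] \<open>N \<le> n\<close> c by (simp add: field_simps)
    then have "c / (1 - q ^ Suc n) \<le> (1 + c) / 2"
      using pos by (simp add: divide_le_eq algebra_simps)
    have "mixture_weight c q (Suc n) = mixture_weight c q n * (c / (1 - q ^ Suc n))"
      using pos by (simp add: mixture_weight_def qfact_Suc field_simps)
    also have "\<dots> \<le> mixture_weight c q n * ((1 + c) / 2)"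
      using mixture_weight_nonneg[OF q c(1), of n] \<open>c / (1 - q ^ Suc n) \<le> (1 + c) / 2\<close>
      by (rule mult_left_mono[rotated])
    finally show "norm (mixture_weight c q (Suc n)) \<le> (1 + c) / 2 * norm (mixture_weight c q n)"
      using mixture_weight_nonneg[OF q c(1)] by (simp add: mult.commute)
  qed (use c in simp)
qed

lemma mixture_weight_summable_on:
  assumes "0 < q" "q < 1" "0 \<le> c" "c < 1"
  shows "mixture_weight c q summable_on UNIV"
  using summable_mixture_weight[OF assms] mixture_weight_nonneg[OF assms(1-3)]
  by (simp add: summable_on_UNIV_nonneg_real_iff)

lemma real_choose_two: "real (i choose 2) = real i * (real i - 1) / 2"
proof (induction i)
  case (Suc i)
  have "Suc i choose 2 = (i choose 2) + i"
    by (simp add: numeral_2_eq_2)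
  then show ?case
    using Suc by (simp add: field_simps)
qed (simp add: binomial_eq_0)

text \<open>Completing the square in the exponent.\<close>

lemma euler_terms_gauss_eq:
  assumes q: "q = exp (- 2 * k\<^sup>2)"
  shows "exp (- x\<^sup>2) * (euler_coeff q i * (c * exp (- k\<^sup>2 - 2 * x * k)) ^ i)
           * (euler_coeff q l * (c * exp (- k\<^sup>2 + 2 * x * k)) ^ l)
         = mixture_weight c q i * mixture_weight c q l * q ^ (i * l) * exp (- (x + k * (real i - real l))\<^sup>2)"
proof -
  have q_power: "q ^ n = exp (- 2 * k\<^sup>2 * real n)" for n
    unfolding q by (simp add: exp_of_nat_mult[symmetric] mult.commute)
  have exp_power: "exp a ^ n = exp (a * real n)" for a n
    by (simp add: exp_of_nat_mult[symmetric] mult.commute)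
  have "- x\<^sup>2 - 2 * k\<^sup>2 * real (i choose 2) + (- k\<^sup>2 - 2 * x * k) * real i
          - 2 * k\<^sup>2 * real (l choose 2) + (- k\<^sup>2 + 2 * x * k) * real l
        = - 2 * k\<^sup>2 * real (i * l) - (x + k * (real i - real l))\<^sup>2"
    by (simp add: real_choose_two power2_eq_square field_simps)
  then show ?thesis
    by (simp add: euler_coeff_def mixture_weight_def q_power exp_power power_mult_distrib
        exp_add[symmetric] exp_diff[symmetric] field_simps)
qed

lemma euler_coeff_mixture_weight_eq_qvdm_term:
  assumes q: "0 < q" "q < 1" and "m \<le> I" "m \<le> L"
  shows "euler_coeff q m * (- c\<^sup>2) ^ m * mixture_weight c q (I - m) * mixture_weight c q (L - m)
         = c ^ (I + L) * qvdm_term q I L m"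
proof -
  have "(- c\<^sup>2) ^ m = ((-1) * c * c) ^ m"
    by (simp add: power2_eq_square)
  also have "\<dots> = (-1) ^ m * c ^ m * c ^ m"
    by (simp only: power_mult_distrib)
  finally have "(- c\<^sup>2) ^ m = (-1) ^ m * c ^ m * c ^ m" .
  moreover have "c ^ (I + L) = c ^ (I - m) * c ^ m * (c ^ (L - m) * c ^ m)"
    using assms(3,4) by (simp add: power_add[symmetric])
  ultimately show ?thesis
    using assms qfact_pos[OF q, of m] qfact_pos[OF q, of "I - m"] qfact_pos[OF q, of "L - m"]
    by (simp add: euler_coeff_def mixture_weight_def qvdm_term_def field_simps)
qed

lemma sum_euler_coeff_mixture_weight:
  assumes q: "0 < q" "q < 1"
  shows "(\<Sum>m\<le>min I L. euler_coeff q m * (- c\<^sup>2) ^ m * mixture_weight c q (I - m) * mixture_weight c q (L - m))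
         = mixture_weight c q I * mixture_weight c q L * q ^ (I * L)"
proof -
  have "(\<Sum>m\<le>min I L. euler_coeff q m * (- c\<^sup>2) ^ m * mixture_weight c q (I - m) * mixture_weight c q (L - m))
        = c ^ (I + L) * (\<Sum>m\<le>min I L. qvdm_term q I L m)"
    unfolding sum_distrib_left
    by (intro sum.cong refl) (simp add: euler_coeff_mixture_weight_eq_qvdm_term[OF q])
  also have "(\<Sum>m\<le>min I L. qvdm_term q I L m) = (\<Sum>m\<le>I. qvdm_term q I L m)"
    by (rule sum.mono_neutral_left) (auto simp: qvdm_term_def)
  finally show ?thesis
    by (simp add: sum_qvdm_term[OF q] mixture_weight_def power_add)
qed

text \<open>Expand \<open>euler_qexp q (- c\<^sup>2) = \<Sum>m. euler_coeff q m * (- c\<^sup>2) ^ m\<close>, multiply out and substitute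
  \<open>(i, l) \<mapsto> (i + m, l + m)\<close>, which leaves \<open>f (i - l)\<close> unchanged; the inner sum over \<open>m\<close> is then
  \<open>sum_euler_coeff_mixture_weight\<close>.\<close>

lemma has_sum_mixture_weight_qpower:
  fixes f :: "real \<Rightarrow> real"
  assumes q: "0 < q" "q < 1" and c: "0 \<le> c" "c < 1" and f: "\<And>t. \<bar>f t\<bar> \<le> 1"
  defines "w \<equiv> mixture_weight c q"
  shows "((\<lambda>(i, l). w i * w l * q ^ (i * l) * f (real i - real l)) has_sum
           euler_qexp q (- c\<^sup>2) * (\<Sum>\<^sub>\<infinity>(i, l). w i * w l * f (real i - real l))) UNIV"
proof -
  define W where "W = (\<lambda>(i, l). w i * w l * f (real i - real l))"
  define e where "e m = euler_coeff q m * (- c\<^sup>2) ^ m" for m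
  have w_nonneg: "0 \<le> w i" for i
    unfolding w_def using mixture_weight_nonneg[OF q c(1)] .
  have W_abs: "(\<lambda>p. norm (W p)) summable_on UNIV \<times> UNIV"
    using summable_on_weight_product[OF w_nonneg mixture_weight_summable_on[OF q c, folded w_def]]
    by (rule Infinite_Sum.abs_summable_on_comparison_test')
       (use f w_nonneg in \<open>auto simp: W_def abs_mult mult_left_le\<close>)
  have e_sum: "(e has_sum euler_qexp q (- c\<^sup>2)) UNIV"
    unfolding e_def by (rule norm_summable_imp_has_sum[OF summable_norm_euler_coeff[OF q] euler_qexp_sums[OF q]])
  have e_abs: "(\<lambda>m. norm (e m)) summable_on UNIV"
    unfolding e_def using summable_norm_euler_coeff[OF q, of "- c\<^sup>2"]
    by (subst summable_on_UNIV_nonneg_real_iff) auto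
  have "((\<lambda>(m, p). e m * W p) has_sum euler_qexp q (- c\<^sup>2) * infsum W UNIV) (UNIV \<times> (UNIV \<times> UNIV))"
    using has_sum_product[OF e_sum has_sum_infsum[OF abs_summable_summable[OF W_abs]] e_abs W_abs] by simp
  also have "?this \<longleftrightarrow> ((\<lambda>(p, m). e m * w (fst p - m) * w (snd p - m) * f (real (fst p) - real (snd p)))
      has_sum euler_qexp q (- c\<^sup>2) * infsum W UNIV) (SIGMA p:UNIV. {..min (fst p) (snd p)})"
    by (rule has_sum_reindex_bij_witness[where j = "\<lambda>(m, (i, l)). ((i + m, l + m), m)"
          and i = "\<lambda>((i, l), m). (m, (i - m, l - m))"]) (auto simp: W_def)
  finally have "((\<lambda>p. \<Sum>m\<le>min (fst p) (snd p). e m * w (fst p - m) * w (snd p - m) * f (real (fst p) - real (snd p)))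
      has_sum euler_qexp q (- c\<^sup>2) * infsum W UNIV) UNIV"
    by (rule has_sum_Sigma') (simp add: has_sum_finite)
  then show ?thesis
    unfolding sum_distrib_right[symmetric]
    by (simp add: W_def e_def w_def case_prod_unfold sum_euler_coeff_mixture_weight[OF q])
qed

text \<open>The factor \<open>exp (- x\<^sup>2) (- c exp (- k\<^sup>2 - 2 x k), - c exp (- k\<^sup>2 + 2 x k); q)\<^sub>\<infinity>\<close> with
  \<open>q = exp (- 2 k\<^sup>2)\<close> of the theorem, in terms of Euler's series (\<open>qpoch_inf_list_eq_gauss_qpoch_factor\<close>).\<close>

definition gauss_qpoch_factor :: "real \<Rightarrow> real \<Rightarrow> real \<Rightarrow> real" where
  "gauss_qpoch_factor c k x =
     exp (- x\<^sup>2) * euler_qexp (exp (- 2 * k\<^sup>2)) (c * exp (- k\<^sup>2 - 2 * x * k))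
       * euler_qexp (exp (- 2 * k\<^sup>2)) (c * exp (- k\<^sup>2 + 2 * x * k))"

lemma has_sum_gauss_qpoch_factor:
  assumes "k \<noteq> 0"
  defines "q \<equiv> exp (- 2 * k\<^sup>2)"
  shows "((\<lambda>(i, l). mixture_weight c q i * mixture_weight c q l * q ^ (i * l)
            * exp (- (x + k * (real i - real l))\<^sup>2)) has_sum gauss_qpoch_factor c k x) UNIV"
proof -
  have q: "0 < q" "q < 1"
    using assms by (simp_all add: q_def)
  have euler_has_sum: "((\<lambda>i. euler_coeff q i * z ^ i) has_sum euler_qexp q z) UNIV" for z
    by (rule norm_summable_imp_has_sum[OF summable_norm_euler_coeff[OF q] euler_qexp_sums[OF q]])
  have euler_abs: "(\<lambda>i. norm (euler_coeff q i * z ^ i)) summable_on UNIV" for z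
    using summable_norm_euler_coeff[OF q, of z] by (subst summable_on_UNIV_nonneg_real_iff) auto
  define b1 where "b1 = c * exp (- k\<^sup>2 - 2 * x * k)"
  define b2 where "b2 = c * exp (- k\<^sup>2 + 2 * x * k)"
  have "((\<lambda>(i, l). exp (- x\<^sup>2) * (euler_coeff q i * b1 ^ i) * (euler_coeff q l * b2 ^ l))
          has_sum exp (- x\<^sup>2) * (euler_qexp q b1 * euler_qexp q b2)) UNIV"
    using has_sum_cmult_right[OF has_sum_product[OF euler_has_sum euler_has_sum euler_abs euler_abs]]
    by (simp add: case_prod_unfold mult.assoc)
  then show ?thesis
    unfolding b1_def b2_def euler_terms_gauss_eq[OF q_def[THEN meta_eq_to_obj_eq]]
    by (simp add: gauss_qpoch_factor_def q_def mult.assoc)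
qed

lemma gauss_qpoch_factor_eq_mixture:
  assumes c: "0 \<le> c" "c < 1" and "k \<noteq> 0"
  defines "q \<equiv> exp (- 2 * k\<^sup>2)"
  shows "gauss_qpoch_factor c k x = euler_qexp q (- c\<^sup>2)
           * (\<Sum>\<^sub>\<infinity>(i, l). mixture_weight c q i * mixture_weight c q l * exp (- (x + k * (real i - real l))\<^sup>2))"
proof -
  have q: "0 < q" "q < 1"
    using assms by (simp_all add: q_def)
  show ?thesis
    using has_sum_mixture_weight_qpower[OF q c, of "\<lambda>t. exp (- (x + k * t)\<^sup>2)"]
      has_sum_gauss_qpoch_factor[OF \<open>k \<noteq> 0\<close>, of c x] has_sum_unique
    unfolding q_def by fastforce
qed

lemma gauss_qpoch_factor_feature_expansion:
  assumes c: "0 \<le> c" "c < 1" and "k \<noteq> 0"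
  obtains g where "has_feature_expansion g (\<lambda>x y. gauss_qpoch_factor c k (x - y))"
proof
  define q where "q = exp (- 2 * k\<^sup>2)"
  define w where "w = mixture_weight c q"
  define P where "P = euler_qexp q (- c\<^sup>2)"
  have q: "0 < q" "q < 1"
    using assms by (simp_all add: q_def)
  have "0 \<le> P"
    unfolding P_def using c by (intro euler_qexp_nonneg[OF q]) (auto simp: power_le_one)
  have sqrt_P: "sqrt P * a * (sqrt P * b) = P * (a * b)" for a b
  proof -
    have "sqrt P * a * (sqrt P * b) = (sqrt P * sqrt P) * (a * b)"
      by (simp only: mult_ac)
    then show ?thesis
      using \<open>0 \<le> P\<close> by simp
  qed
  show "has_feature_expansion (\<lambda>N x. sqrt P * (\<Sum>\<^sub>\<infinity>i. w i * gauss_feature N (x + k * real i)))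
          (\<lambda>x y. gauss_qpoch_factor c k (x - y))"
    unfolding has_feature_expansion_def
  proof (intro allI)
    fix x y :: real
    have mix: "((\<lambda>N. (\<Sum>\<^sub>\<infinity>i. w i * gauss_feature N (x + k * real i)) * (\<Sum>\<^sub>\<infinity>l. w l * gauss_feature N (y + k * real l)))
           has_sum (\<Sum>\<^sub>\<infinity>(i, l). w i * w l * exp (- ((x + k * real i) - (y + k * real l))\<^sup>2))) UNIV"
      using gauss_mixture_expansion[OF mixture_weight_nonneg[OF q c(1)] mixture_weight_summable_on[OF q c]]
      unfolding w_def .
    have shift: "(\<lambda>(i, l). w i * w l * exp (- ((x + k * real i) - (y + k * real l))\<^sup>2))
        = (\<lambda>(i, l). w i * w l * exp (- ((x - y) + k * (real i - real l))\<^sup>2))"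
      by (simp add: algebra_simps)
    from has_sum_cmult_right[OF mix, of P] show "((\<lambda>N. sqrt P * (\<Sum>\<^sub>\<infinity>i. w i * gauss_feature N (x + k * real i))
          * (sqrt P * (\<Sum>\<^sub>\<infinity>l. w l * gauss_feature N (y + k * real l)))) has_sum gauss_qpoch_factor c k (x - y)) UNIV"
      unfolding sqrt_P gauss_qpoch_factor_eq_mixture[OF c \<open>k \<noteq> 0\<close>] q_def[symmetric]
      unfolding w_def[symmetric] P_def[symmetric] shift .
  qed
qed

lemma isCont_gauss_qpoch_factor:
  assumes "k \<noteq> 0"
  shows "isCont (gauss_qpoch_factor c k) x"
proof -
  have q: "0 < exp (- 2 * k\<^sup>2)" "exp (- 2 * k\<^sup>2) < 1"
    using assms by simp_all
  show ?thesis
    unfolding gauss_qpoch_factor_def[abs_def]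
    by (intro continuous_intros continuous_at_compose[OF _ isCont_euler_qexp[OF q], unfolded o_def])
qed

lemma gauss_qpoch_factor_0_ge_1:
  assumes "0 \<le> c" "k \<noteq> 0"
  shows "1 \<le> gauss_qpoch_factor c k 0"
  using assms euler_qexp_ge_1[of "exp (- 2 * k\<^sup>2)" "c * exp (- k\<^sup>2)"]
    mult_mono[of 1 "euler_qexp (exp (- 2 * k\<^sup>2)) (c * exp (- k\<^sup>2))" 1]
  by (simp add: gauss_qpoch_factor_def)

lemma qpoch_inf_list_eq_gauss_qpoch_factor:
  assumes "0 \<le> c" "k \<noteq> 0"
  shows "complex_of_real (exp (- x\<^sup>2)) *
           qpoch_inf_list [complex_of_real (- c * exp (- k\<^sup>2 - 2 * x * k)),
                           complex_of_real (- c * exp (- k\<^sup>2 + 2 * x * k))] (exp (- 2 * k\<^sup>2))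
         = complex_of_real (gauss_qpoch_factor c k x)"
  using assms qpoch_inf_list_pair_eq_euler_qexp[of "exp (- 2 * k\<^sup>2)" "c * exp (- k\<^sup>2 - 2 * x * k)"
      "c * exp (- k\<^sup>2 + 2 * x * k)"]
  by (simp add: gauss_qpoch_factor_def mult.assoc)

lemma gauss_qpoch_factor_le_0:
  assumes "0 \<le> c" "c < 1" "k \<noteq> 0"
  shows "gauss_qpoch_factor c k x \<le> gauss_qpoch_factor c k 0"
proof -
  obtain g where "has_feature_expansion g (\<lambda>x y. gauss_qpoch_factor c k (x - y))"
    using gauss_qpoch_factor_feature_expansion[OF assms] .
  from feature_expansion_le[OF this, of x 0] show ?thesis
    by simp
qed

lemma qpoch_inf_list_pair_le_exp_square:
  assumes "k \<noteq> 0" "0 \<le> c" "c < sqrt (exp (- 2 * k\<^sup>2))"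
  shows "Re (qpoch_inf_list [complex_of_real (- c * exp (- 2 * x * k)),
                             complex_of_real (- c * exp (2 * x * k))] (exp (- 2 * k\<^sup>2)))
         \<le> exp (x\<^sup>2) * Re (qpoch_inf_list [complex_of_real (- c), complex_of_real (- c)] (exp (- 2 * k\<^sup>2)))"
proof -
  define c' where "c' = c * exp (k\<^sup>2)"
  have "sqrt (exp (- 2 * k\<^sup>2)) = exp (- k\<^sup>2)"
    by (rule real_sqrt_unique) (simp_all add: power2_eq_square exp_add[symmetric])
  then have "c' < exp (- k\<^sup>2) * exp (k\<^sup>2)"
    using assms by (simp add: c'_def)
  then have c': "0 \<le> c'" "c' < 1"
    using assms by (simp_all add: c'_def exp_minus)
  have shift: "- c' * exp (- k\<^sup>2 - 2 * t * k) = - c * exp (- 2 * t * k)"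
    "- c' * exp (- k\<^sup>2 + 2 * t * k) = - c * exp (2 * t * k)" for t
    by (simp_all add: c'_def mult.assoc exp_add[symmetric])
  have "complex_of_real (exp (- t\<^sup>2)) *
          qpoch_inf_list [complex_of_real (- c * exp (- 2 * t * k)), complex_of_real (- c * exp (2 * t * k))]
            (exp (- 2 * k\<^sup>2))
        = complex_of_real (gauss_qpoch_factor c' k t)" for t
    using qpoch_inf_list_eq_gauss_qpoch_factor[OF c'(1) \<open>k \<noteq> 0\<close>, of t] unfolding shift .
  from arg_cong[where f = Re, OF this]
  have "exp (- t\<^sup>2) * Re (qpoch_inf_list [complex_of_real (- c * exp (- 2 * t * k)),
          complex_of_real (- c * exp (2 * t * k))] (exp (- 2 * k\<^sup>2))) = gauss_qpoch_factor c' k t" for t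
    by simp
  from this[of x] this[of 0] gauss_qpoch_factor_le_0[OF c' \<open>k \<noteq> 0\<close>, of x]
  show ?thesis
    by (simp add: exp_minus field_simps)
qed

lemma positive_definite_of_real:
  fixes h :: "real \<Rightarrow> real"
  assumes "continuous_on UNIV h" "0 < h 0" "pd_kernel (\<lambda>x y. complex_of_real (h (x - y)))"
  shows "positive_definite (\<lambda>x. complex_of_real (h x))"
  using assms unfolding positive_definite_def pd_kernel_def
  by (auto intro: continuous_on_of_real)

lemma positive_definite_prod_gauss_qpoch_factor:
  assumes "finite J" and c: "\<And>j. j \<in> J \<Longrightarrow> 0 \<le> c j \<and> c j < 1" and k: "\<And>j. j \<in> J \<Longrightarrow> k j \<noteq> 0"
  shows "positive_definite (\<lambda>x. complex_of_real (\<Prod>j\<in>J. gauss_qpoch_factor (c j) (k j) x))"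
proof (rule positive_definite_of_real)
  show "continuous_on UNIV (\<lambda>x. \<Prod>j\<in>J. gauss_qpoch_factor (c j) (k j) x)"
    using isCont_gauss_qpoch_factor k by (intro continuous_at_imp_continuous_on ballI continuous_intros) auto
  show "0 < (\<Prod>j\<in>J. gauss_qpoch_factor (c j) (k j) 0)"
  proof (rule prod_pos)
    show "0 < gauss_qpoch_factor (c j) (k j) 0" if "j \<in> J" for j
      using gauss_qpoch_factor_0_ge_1[of "c j" "k j"] c[OF that] k[OF that] by linarith
  qed
  have "\<forall>j\<in>J. \<exists>g. has_feature_expansion g (\<lambda>x y. gauss_qpoch_factor (c j) (k j) (x - y))"
    using gauss_qpoch_factor_feature_expansion c k by metis
  then obtain g where
    "\<And>j. j \<in> J \<Longrightarrow> has_feature_expansion (g j) (\<lambda>x y. gauss_qpoch_factor (c j) (k j) (x - y))"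
    by metis
  then show "pd_kernel (\<lambda>x y. complex_of_real (\<Prod>j\<in>J. gauss_qpoch_factor (c j) (k j) (x - y)))"
    unfolding of_real_prod using \<open>finite J\<close>
    by (intro pd_kernel_prod_feature_expansions[where K = "\<lambda>j x y. gauss_qpoch_factor (c j) (k j) (x - y)"])
qed

theorem theorem2p6:
  fixes n :: nat and c k :: "nat \<Rightarrow> real"
  assumes "\<And>j. 1 \<le> j \<Longrightarrow> j \<le> n \<Longrightarrow> 0 < c j \<and> c j < 1"
      and "\<And>j. 1 \<le> j \<Longrightarrow> j \<le> n \<Longrightarrow> 0 < k j"
  defines "q \<equiv> (\<lambda>j. exp (- 2 * (k j)\<^sup>2))"
  defines "H \<equiv> (\<lambda>x::real. \<Prod>j=1..n. complex_of_real (exp (- x\<^sup>2)) *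
              qpoch_inf_list [complex_of_real (- c j * exp (- (k j)\<^sup>2 - 2 * x * k j)),
                              complex_of_real (- c j * exp (- (k j)\<^sup>2 + 2 * x * k j))] (q j))"
  shows "positive_definite H \<and>
         (\<forall>m (x :: nat \<Rightarrow> real). psd_matrix m (\<lambda>r s.
           \<Prod>j=1..n. complex_of_real (exp (- (x r - x s)\<^sup>2)) *
              qpoch_inf_list [complex_of_real (- c j * exp (- (k j)\<^sup>2 - 2 * (x r - x s) * k j)),
                              complex_of_real (- c j * exp (- (k j)\<^sup>2 - 2 * (x s - x r) * k j))] (q j))) \<and>
         (\<forall>(kk::real) cc x. kk > 0 \<longrightarrow> 0 < cc \<longrightarrow> cc < sqrt (exp (- 2 * kk\<^sup>2)) \<longrightarrow>
           Re (qpoch_inf_list [complex_of_real (- cc * exp (- 2 * x * kk)),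
                               complex_of_real (- cc * exp (2 * x * kk))] (exp (- 2 * kk\<^sup>2)))
           \<le> exp (x\<^sup>2) * Re (qpoch_inf_list [complex_of_real (- cc), complex_of_real (- cc)] (exp (- 2 * kk\<^sup>2))))"
proof -
  have c: "0 \<le> c j \<and> c j < 1" and k: "k j \<noteq> 0" if "j \<in> {1..n}" for j
    using assms(1,2)[of j] that by auto
  have "H = (\<lambda>x. complex_of_real (\<Prod>j=1..n. gauss_qpoch_factor (c j) (k j) x))"
    unfolding H_def q_def of_real_prod
    using qpoch_inf_list_eq_gauss_qpoch_factor c k by (intro ext prod.cong) auto
  then have "positive_definite H"
    using positive_definite_prod_gauss_qpoch_factor[of "{1..n}" c k] c k by simp
  moreover have "(\<Prod>j=1..n. complex_of_real (exp (- (x r - x s)\<^sup>2)) *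
              qpoch_inf_list [complex_of_real (- c j * exp (- (k j)\<^sup>2 - 2 * (x r - x s) * k j)),
                              complex_of_real (- c j * exp (- (k j)\<^sup>2 - 2 * (x s - x r) * k j))] (q j))
      = H (x r - x s)" for x :: "nat \<Rightarrow> real" and r s
  proof -
    have flip: "- (k j)\<^sup>2 - 2 * (x s - x r) * k j = - (k j)\<^sup>2 + 2 * (x r - x s) * k j" for j
      by (simp add: algebra_simps)
    show ?thesis
      by (simp only: H_def flip)
  qed
  ultimately show ?thesis
    using qpoch_inf_list_pair_le_exp_square unfolding positive_definite_def by auto
qed

end
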